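(* The mechanism RandPoly is a universally truthful mechanism without money and with verification for CAs with unknown $k$-minded bidders (single supply), and it achieves an expected approximation ratio of $O(\sqrt m)$ (specifically at most $2(\sqrt m+1)$).
   Context: Combinatorial auction with a set $\mathsf U$ of $m$ goods (single copy each) and $n$ bidders. True type of bidder $i$: $t_i=(v_i,\mathcal S_i)$ with $\mathcal S_i$ a private collection of $k$ nonempty subsets of $\mathsf U$ and $v_i:\mathcal S_i\to\mathbb R_{\ge0}$ private, extended by $v_i(T)=\max\{v_i(S'):S'\in\mathcal S_i,S'\subseteq T\}$ ($0$ if none). Greedy algorithm: list elementary bids $(i,S,w_i(S))$ with $w_i(S)>0$ in non-increasing order of value (ties in favour of smaller bidder index); accept a bid (allocate $S$ to $i$) iff $i$ has no set yet and $S$ is disjoint from all accepted sets. RandPoly: let $v_{\max}$ be the largest declared value of any demanded set and $S_{\max}$ a set of that value (ties broken in a bid-independent way); with probability $1/2$ allocate only $S_{\max}$ to its bidder; with probability $1/2$ output the greedy allocation computed on the subinstance consisting only of the bids $(i,S,w_i(S))$ with $|S|\le\sqrt m$. Verification: bidder $i$ with true type $t_i$ facing $\mathbf b_{-i}$ may declare $b_i=(z,\mathcal T)$ only if $z(A_i(b_i,\mathbf b_{-i}))\le v_i(A_i(b_i,\mathbf b_{-i}))$. A deterministic mechanism is truthful without money and with verification if for all $i$, $\mathbf b_{-i}$, true $t_i$ and permitted $b_i$, $v_i(A_i(t_i,\mathbf b_{-i}))\ge v_i(A_i(b_i,\mathbf b_{-i}))$; universally truthful means a probability distribution over such deterministic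 mechanisms. Approximation ratio $\alpha$: on truthful input, expected social welfare $\ge\mathrm{OPT}/\alpha$. *)

theory Defs
  imports "HOL-Probability.Probability"
begin

text \<open>A (declared or true) type of a bidder: a valuation on demanded sets and the
  collection of demanded sets.\<close>
type_synonym 'g btype = "('g set \<Rightarrow> real) \<times> 'g set set"

definition valid_type :: "'g set \<Rightarrow> nat \<Rightarrow> 'g btype \<Rightarrow> bool" where
  "valid_type U k t \<longleftrightarrow> finite (snd t) \<and> card (snd t) = k \<and>
     (\<forall>S\<in>snd t. S \<noteq> {} \<and> S \<subseteq> U \<and> fst t S \<ge> 0)"

definition val :: "'g btype \<Rightarrow> 'g set \<Rightarrow> real" where
  "val t T = Max (insert 0 (fst t ` {S \<in> snd t. S \<subseteq> T}))"

text \<open>Greedy order: non-increasing declared value, ties by smaller bidder index,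
  remaining ties (same bidder, same value) by a fixed bid-independent priority.
  Realised as successive stable sorts (priority, then bidder index, then value).\<close>
definition greedy_order :: "(nat \<Rightarrow> 'g btype) \<Rightarrow> (nat \<times> 'g set \<Rightarrow> nat) \<Rightarrow> (nat \<times> 'g set) set \<Rightarrow> (nat \<times> 'g set) list" where
  "greedy_order b prio E =
     sort_key (\<lambda>p. - fst (b (fst p)) (snd p)) (sort_key fst (sorted_key_list_of_set prio E))"

definition demanded :: "nat \<Rightarrow> (nat \<Rightarrow> 'g btype) \<Rightarrow> ('g set \<Rightarrow> bool) \<Rightarrow> (nat \<times> 'g set) set" where
  "demanded n b P = {(i, S). i < n \<and> S \<in> snd (b i) \<and> P S}"

definition sorted_bids :: "nat \<Rightarrow> (nat \<Rightarrow> 'g btype) \<Rightarrow> (nat \<times> 'g set \<Rightarrow> nat) \<Rightarrow> ('g set \<Rightarrow> bool) \<Rightarrow> (nat \<times> 'g set) list" where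
  "sorted_bids n b prio P =
     greedy_order b prio {p \<in> demanded n b P. fst (b (fst p)) (snd p) > 0}"

fun greedy_scan :: "(nat \<times> 'g set) list \<Rightarrow> (nat \<times> 'g set) list \<Rightarrow> (nat \<times> 'g set) list" where
  "greedy_scan acc [] = acc"
| "greedy_scan acc ((i, S) # rest) =
     (if i \<notin> fst ` set acc \<and> (\<forall>(j, T)\<in>set acc. S \<inter> T = {})
      then greedy_scan ((i, S) # acc) rest else greedy_scan acc rest)"

definition alloc_of :: "(nat \<times> 'g set) list \<Rightarrow> nat \<Rightarrow> 'g set" where
  "alloc_of acc i = \<Union> {S. (i, S) \<in> set acc}"

type_synonym 'g mech = "(nat \<Rightarrow> 'g btype) \<Rightarrow> nat \<Rightarrow> 'g set"

definition greedy_small :: "'g set \<Rightarrow> nat \<Rightarrow> (nat \<times> 'g set \<Rightarrow> nat) \<Rightarrow> 'g mech" where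
  "greedy_small U n prio b =
     alloc_of (greedy_scan [] (sorted_bids n b prio (\<lambda>S. real (card S) \<le> sqrt (real (card U)))))"

definition max_only :: "nat \<Rightarrow> (nat \<times> 'g set \<Rightarrow> nat) \<Rightarrow> 'g mech" where
  "max_only n prio b =
     (let L = greedy_order b prio (demanded n b (\<lambda>_. True))
      in if L = [] then (\<lambda>_. {}) else alloc_of [hd L])"

definition RandPoly :: "'g set \<Rightarrow> nat \<Rightarrow> (nat \<times> 'g set \<Rightarrow> nat) \<Rightarrow> 'g mech pmf" where
  "RandPoly U n prio =
     map_pmf (\<lambda>c. if c then max_only n prio else greedy_small U n prio) (bernoulli_pmf (1/2))"

definition truthful_verif :: "'g set \<Rightarrow> nat \<Rightarrow> nat \<Rightarrow> 'g mech \<Rightarrow> bool" where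
  "truthful_verif U n k M \<longleftrightarrow>
     (\<forall>i<n. \<forall>b t b'. (\<forall>j<n. valid_type U k (b j)) \<longrightarrow> valid_type U k t \<longrightarrow> valid_type U k b' \<longrightarrow>
        val b' (M (b(i := b')) i) \<le> val t (M (b(i := b')) i) \<longrightarrow>
        val t (M (b(i := b')) i) \<le> val t (M (b(i := t)) i))"

definition universally_truthful :: "'g set \<Rightarrow> nat \<Rightarrow> nat \<Rightarrow> 'g mech pmf \<Rightarrow> bool" where
  "universally_truthful U n k D \<longleftrightarrow> (\<forall>M\<in>set_pmf D. truthful_verif U n k M)"

definition feasible :: "'g set \<Rightarrow> nat \<Rightarrow> (nat \<Rightarrow> 'g set) \<Rightarrow> bool" where
  "feasible U n A \<longleftrightarrow> (\<forall>i<n. A i \<subseteq> U) \<and> (\<forall>i<n. \<forall>j<n. i \<noteq> j \<longrightarrow> A i \<inter> A j = {})"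

definition welfare :: "nat \<Rightarrow> (nat \<Rightarrow> 'g btype) \<Rightarrow> (nat \<Rightarrow> 'g set) \<Rightarrow> real" where
  "welfare n t A = (\<Sum>i<n. val (t i) (A i))"

definition OPT :: "'g set \<Rightarrow> nat \<Rightarrow> (nat \<Rightarrow> 'g btype) \<Rightarrow> real" where
  "OPT U n t = Sup {welfare n t A | A. feasible U n A}"

definition expected_welfare :: "nat \<Rightarrow> (nat \<Rightarrow> 'g btype) \<Rightarrow> 'g mech pmf \<Rightarrow> real" where
  "expected_welfare n t D = measure_pmf.expectation D (\<lambda>M. welfare n t (M t))"

end

theory Submission
  imports Defs
begin

(*
  Both deterministic mechanisms in the support of RandPoly are monotone. Suppose bidder i wins A
  with a lie and, as verification guarantees, A contains a set S it truly demands with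
  v_i(S) at least the declared value of A. The bids of the other bidders that precede (i, S) in
  the truthful greedy order form an initial segment of those that precede (i, A) in the lying one,
  so a truthful i is served no later than at (i, S) and gets a set worth at least v_i(S); for the
  mechanism allocating only S_max this segment must even be empty. Monotonicity plus verification
  gives truthfulness.

  For the approximation, split an optimal allocation into its sets with more than sqrt m goods --
  at most sqrt m disjoint ones, each worth at most v_max -- and the others. Each small set is
  charged to an accepted greedy bid that is not later and shares its bidder or one of its at most
  sqrt m goods; by disjointness each accepted bid is charged at most sqrt m + 1 times. Hence
  OPT <= (sqrt m + 1) (v_max + greedy welfare) = 2 (sqrt m + 1) E[welfare].
*)

section \<open>Greedy order\<close>

definition bid_value :: "(nat \<Rightarrow> 'g btype) \<Rightarrow> nat \<times> 'g set \<Rightarrow> real" where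
  "bid_value b p = fst (b (fst p)) (snd p)"

definition greedy_before ::
    "(nat \<Rightarrow> 'g btype) \<Rightarrow> (nat \<times> 'g set \<Rightarrow> nat) \<Rightarrow> nat \<times> 'g set \<Rightarrow> nat \<times> 'g set \<Rightarrow> bool" where
  "greedy_before b prio p q \<longleftrightarrow> bid_value b p > bid_value b q \<or>
     (bid_value b p = bid_value b q \<and> (fst p < fst q \<or> (fst p = fst q \<and> prio p < prio q)))"

lemma greedy_before_asym: "greedy_before b prio p q \<Longrightarrow> \<not> greedy_before b prio q p"
  unfolding greedy_before_def by auto

lemma greedy_before_value_le: "greedy_before b prio p q \<Longrightarrow> bid_value b q \<le> bid_value b p"
  unfolding greedy_before_def by auto

lemma greedy_before_cong:
  assumes "\<forall>j. j \<noteq> i \<longrightarrow> B j = B' j" "fst p \<noteq> i" "fst q \<noteq> i"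
  shows "greedy_before B' prio p q = greedy_before B prio p q"
  using assms by (simp add: greedy_before_def bid_value_def)

lemma (in linorder) sorted_key_list_of_set_set_sorted:
  assumes "finite A" "inj_on f A"
  shows "set (sorted_key_list_of_set f A) = A \<and>
    sorted_wrt (\<lambda>p q. f p < f q) (sorted_key_list_of_set f A)"
proof -
  interpret folding_insort_key "(\<le>)" "(<)" A f
    by unfold_locales (rule assms(2))
  have "sorted_wrt (<) (map f (sorted_key_list_of_set f A))"
    using strict_sorted_key_list_of_set[OF subset_refl] by simp
  then show ?thesis using assms by (simp add: sorted_wrt_map)
qed

lemma sorted_wrt_insort_key_lex:
  assumes "\<forall>y\<in>set ys. R x y" "sorted_wrt (\<lambda>p q. f p < f q \<or> (f p = f q \<and> R p q)) ys" "transp R"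
  shows "sorted_wrt (\<lambda>p q. f p < f q \<or> (f p = f q \<and> R p q)) (insort_key f x ys)"
  using assms(1,2)
proof (induction ys)
  case (Cons y ys)
  show ?case
  proof (cases "f x \<le> f y")
    case True
    have "f x < f z \<or> (f x = f z \<and> R x z)" if "z \<in> set ys" for z
      using Cons.prems that True assms(3) by (auto dest: transpD)
    then show ?thesis using True Cons.prems by auto
  next
    case False
    then show ?thesis using Cons by (auto simp: set_insort_key)
  qed
qed simp

lemma sorted_wrt_sort_key_lex:
  assumes "sorted_wrt R xs" "transp R"
  shows "sorted_wrt (\<lambda>p q. f p < f q \<or> (f p = f q \<and> R p q)) (sort_key f xs)"
  using assms(1) by (induction xs) (simp_all add: sorted_wrt_insort_key_lex assms(2))

lemma greedy_order_set_sorted: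
  assumes "finite E" "inj_on prio E"
  shows "set (greedy_order b prio E) = E"
    and "sorted_wrt (greedy_before b prio) (greedy_order b prio E)"
proof -
  show "set (greedy_order b prio E) = E"
    using sorted_key_list_of_set_set_sorted[OF assms] by (simp add: greedy_order_def)
  have "sorted_wrt (\<lambda>p q. fst p < fst q \<or> (fst p = fst q \<and> prio p < prio q))
      (sort_key fst (sorted_key_list_of_set prio E))"
    by (rule sorted_wrt_sort_key_lex[OF conjunct2[OF sorted_key_list_of_set_set_sorted[OF assms]]])
       (auto intro: transpI)
  then have "sorted_wrt (\<lambda>p q. - bid_value b p < - bid_value b q \<or> (- bid_value b p = - bid_value b q \<and>
      (fst p < fst q \<or> (fst p = fst q \<and> prio p < prio q)))) (greedy_order b prio E)"
    unfolding greedy_order_def bid_value_def[abs_def]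
    by (rule sorted_wrt_sort_key_lex) (auto intro!: transpI)
  then show "sorted_wrt (greedy_before b prio) (greedy_order b prio E)"
    by (rule sorted_wrt_mono_rel[rotated]) (auto simp: greedy_before_def)
qed

lemma sorted_wrt_asym_distinct:
  "sorted_wrt R xs \<Longrightarrow> (\<And>a b. R a b \<Longrightarrow> \<not> R b a) \<Longrightarrow> distinct xs"
  by (induction xs) auto

lemma sorted_wrt_asym_unique:
  assumes "sorted_wrt R xs" "sorted_wrt R ys" "set xs = set ys" and asym: "\<And>a b. R a b \<Longrightarrow> \<not> R b a"
  shows "xs = ys"
  using assms(1-3)
proof (induction xs arbitrary: ys)
  case (Cons x xs)
  then obtain y ys' where ys: "ys = y # ys'" by (cases ys) auto
  have "x = y"
  proof (rule ccontr)
    assume "x \<noteq> y"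
    then have "R x y" "R y x" using Cons.prems ys by auto
    then show False using asym by blast
  qed
  moreover have "x \<notin> set xs" "y \<notin> set ys'"
    using Cons.prems ys asym[of x x] asym[of y y] by auto
  ultimately have "set xs = set ys'" using Cons.prems ys by (metis insert_ident list.simps(15))
  then show ?case using Cons ys \<open>x = y\<close> by simp
qed simp

lemma filter_prefix_eq_takeWhile:
  assumes "sorted_wrt R (P @ x # Rs)" and asym: "\<And>a b. R a b \<Longrightarrow> \<not> R b a"
  shows "filter Q P = takeWhile (\<lambda>p. R p x) (filter Q (P @ x # Rs))"
proof -
  have "\<not> R p x" if "p \<in> set (x # Rs)" for p
    using that assms asym[of x x] by (auto simp: sorted_wrt_append)
  then have "takeWhile (\<lambda>p. R p x) (filter Q (x # Rs)) = []"
    by (metis filter_is_subset hd_in_set subsetD takeWhile_eq_Nil_iff)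
  moreover have "\<forall>p\<in>set (filter Q P). R p x" using assms(1) by (auto simp: sorted_wrt_append)
  ultimately show ?thesis unfolding filter_append by (subst takeWhile_append2) auto
qed

lemma takeWhile_mono_prefix:
  "\<forall>x\<in>set xs. P x \<longrightarrow> Q x \<Longrightarrow> \<exists>zs. takeWhile Q xs = takeWhile P xs @ zs"
  by (induction xs) auto

lemma greedy_order_others_prefix:
  assumes fin: "finite E" "finite E'" and inj: "inj_on prio E" "inj_on prio E'"
    and others: "\<forall>j. j \<noteq> i \<longrightarrow> B j = B' j"
    and same: "{p \<in> E. fst p \<noteq> i} = {p \<in> E'. fst p \<noteq> i}"
    and L: "greedy_order B prio E = P @ (i, S) # Rs"
    and L': "greedy_order B' prio E' = P' @ (i, A) # Rs'"
    and le: "fst (B' i) A \<le> fst (B i) S"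
  shows "\<exists>zs. filter (\<lambda>p. fst p \<noteq> i) P' = filter (\<lambda>p. fst p \<noteq> i) P @ zs"
proof -
  define oth where "oth = (\<lambda>p :: nat \<times> 'a set. fst p \<noteq> i)"
  define Os where "Os = filter oth (greedy_order B prio E)"
  define Os' where "Os' = filter oth (greedy_order B' prio E')"
  note sorted = greedy_order_set_sorted(2)[OF fin(1) inj(1), of B]
  note sorted' = greedy_order_set_sorted(2)[OF fin(2) inj(2), of B']
  have "sorted_wrt (greedy_before B prio) Os'"
    using sorted_wrt_filter[OF sorted', of oth] unfolding Os'_def
    by (rule sorted_wrt_mono_rel[rotated]) (auto simp: oth_def greedy_before_cong[OF others])
  moreover have "set Os = set Os'"
    using same greedy_order_set_sorted(1)[OF fin(1) inj(1)]
      greedy_order_set_sorted(1)[OF fin(2) inj(2)]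
    by (auto simp: Os_def Os'_def oth_def)
  ultimately have Os_eq: "Os' = Os"
    using sorted_wrt_asym_unique sorted_wrt_filter[OF sorted] greedy_before_asym
    unfolding Os_def by metis
  have "filter oth P = takeWhile (\<lambda>p. greedy_before B prio p (i, S)) Os"
    using filter_prefix_eq_takeWhile[OF sorted[unfolded L] greedy_before_asym]
    by (simp add: Os_def L)
  moreover have "filter oth P' = takeWhile (\<lambda>p. greedy_before B' prio p (i, A)) Os"
    using filter_prefix_eq_takeWhile[OF sorted'[unfolded L'] greedy_before_asym]
    by (simp add: Os_eq[symmetric] Os'_def L')
  moreover have "greedy_before B' prio p (i, A)"
    if "p \<in> set Os" "greedy_before B prio p (i, S)" for p
  proof -
    have "fst p \<noteq> i" using that(1) by (simp add: Os_def oth_def)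
    then show ?thesis using that(2) le others
      by (auto simp: greedy_before_def bid_value_def)
  qed
  ultimately show ?thesis using takeWhile_mono_prefix unfolding oth_def by metis
qed

section \<open>The greedy scan\<close>

lemma greedy_scan_append: "greedy_scan acc (xs @ ys) = greedy_scan (greedy_scan acc xs) ys"
  by (induction acc xs rule: greedy_scan.induct) auto

lemma greedy_scan_mono: "set acc \<subseteq> set (greedy_scan acc xs)"
  by (induction acc xs rule: greedy_scan.induct) auto

lemma set_greedy_scan_subset: "set (greedy_scan acc xs) \<subseteq> set acc \<union> set xs"
proof (induction acc xs rule: greedy_scan.induct)
  case (2 acc i S rest)
  then show ?case by (cases "i \<notin> fst ` set acc \<and> (\<forall>(j, T)\<in>set acc. S \<inter> T = {})") auto
qed simp

lemma distinct_greedy_scan: "distinct (map fst acc) \<Longrightarrow> distinct (map fst (greedy_scan acc xs))"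
  by (induction acc xs rule: greedy_scan.induct) auto

lemma greedy_scan_filter_unserved:
  "i \<notin> fst ` set (greedy_scan acc xs) \<Longrightarrow>
     greedy_scan acc (filter (\<lambda>p. fst p \<noteq> i) xs) = greedy_scan acc xs"
proof (induction acc xs rule: greedy_scan.induct)
  case (2 acc j S rest)
  show ?case
  proof (cases "j \<notin> fst ` set acc \<and> (\<forall>(j', T)\<in>set acc. S \<inter> T = {})")
    case True
    have "(j, S) \<in> set (greedy_scan acc ((j, S) # rest))"
      using True greedy_scan_mono[of "(j, S) # acc" rest] by auto
    then have "j \<noteq> i" using "2.prems" by force
    then show ?thesis using 2 True by simp
  next
    case False
    then have skip: "greedy_scan acc ((j, S) # xs) = greedy_scan acc xs" for xs
      by (simp only: greedy_scan.simps if_not_P[OF False] if_False)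
    have "greedy_scan acc (filter (\<lambda>p. fst p \<noteq> i) rest) = greedy_scan acc rest"
      using "2.IH"(2)[OF False] "2.prems" by (simp add: skip del: greedy_scan.simps)
    then show ?thesis using skip[of rest] skip[of "filter (\<lambda>p. fst p \<noteq> i) rest"]
      by (cases "j = i") (simp_all del: greedy_scan.simps)
  qed
qed simp

lemma greedy_scan_accepted_free:
  assumes "distinct (P @ x # Rs)" "x \<in> set (greedy_scan acc (P @ x # Rs))" "x \<notin> set acc"
  shows "fst x \<notin> fst ` set (greedy_scan acc P) \<and> (\<forall>(j, T)\<in>set (greedy_scan acc P). snd x \<inter> T = {})"
proof (rule ccontr)
  assume "\<not> ?thesis"
  then have "greedy_scan acc (P @ x # Rs) = greedy_scan (greedy_scan acc P) Rs"
    by (cases x) (auto simp: greedy_scan_append)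
  then have "x \<in> set acc \<union> set P \<union> set Rs"
    using assms(2) set_greedy_scan_subset[of "greedy_scan acc P" Rs]
      set_greedy_scan_subset[of acc P]
    by auto
  then show False using assms by auto
qed

lemma greedy_scan_accepts_free:
  assumes "fst x \<notin> fst ` set (greedy_scan acc P)" "\<forall>(j, T)\<in>set (greedy_scan acc P). snd x \<inter> T = {}"
  shows "x \<in> set (greedy_scan acc (P @ x # Rs))"
proof -
  have "greedy_scan acc (P @ x # Rs) = greedy_scan (x # greedy_scan acc P) Rs"
    using assms by (cases x) (auto simp: greedy_scan_append)
  then show ?thesis using greedy_scan_mono[of "x # greedy_scan acc P" Rs] by auto
qed

lemma greedy_scan_blocker:
  assumes "sorted_wrt R xs" "q \<in> set xs"
  shows "\<exists>g\<in>set (greedy_scan acc xs).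
    (g \<in> set acc \<or> g = q \<or> R g q) \<and> (fst g = fst q \<or> snd g \<inter> snd q \<noteq> {})"
  using assms
proof (induction acc xs rule: greedy_scan.induct)
  case (2 acc j S rest)
  show ?case
  proof (cases "j \<notin> fst ` set acc \<and> (\<forall>(j', T)\<in>set acc. S \<inter> T = {})")
    case True
    then have take: "greedy_scan acc ((j, S) # rest) = greedy_scan ((j, S) # acc) rest" by simp
    show ?thesis
    proof (cases "(j, S) = q")
      case True
      then show ?thesis using greedy_scan_mono[of "(j, S) # acc" rest]
        unfolding take by (intro bexI[of _ q]) auto
    next
      case q: False
      then have "q \<in> set rest" "R (j, S) q" "sorted_wrt R rest" using "2.prems" by auto
      with "2.IH"(1)[OF True] show ?thesis unfolding take by fastforce
    qed
  next
    case False
    then have skip: "greedy_scan acc ((j, S) # rest) = greedy_scan acc rest"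
      by (simp only: greedy_scan.simps if_not_P[OF False] if_False)
    show ?thesis
    proof (cases "(j, S) = q")
      case True
      then obtain g where "g \<in> set acc" "fst g = j \<or> snd g \<inter> S \<noteq> {}" using False by force
      then show ?thesis using True greedy_scan_mono[of acc rest] unfolding skip
        by (intro bexI[of _ g]) auto
    next
      case q: False
      then show ?thesis using "2.IH"(2)[OF False] "2.prems" unfolding skip by auto
    qed
  qed
qed simp

lemma greedy_scan_served_by:
  assumes win: "(i, A) \<in> set (greedy_scan [] (P' @ (i, A) # Rs'))"
    and dist: "distinct (P' @ (i, A) # Rs')"
    and prefix: "filter (\<lambda>p. fst p \<noteq> i) P' = filter (\<lambda>p. fst p \<noteq> i) P @ zs"
    and "S \<subseteq> A"
  shows "i \<in> fst ` set (greedy_scan [] (P @ [(i, S)]))"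
proof (cases "i \<in> fst ` set (greedy_scan [] P)")
  case True
  then show ?thesis using greedy_scan_mono[of "greedy_scan [] P" "[(i, S)]"]
    by (auto simp: greedy_scan_append)
next
  case False
  have free: "i \<notin> fst ` set (greedy_scan [] P')" "\<forall>(j, T)\<in>set (greedy_scan [] P'). A \<inter> T = {}"
    using greedy_scan_accepted_free[OF dist win] by simp_all
  have "greedy_scan [] P' = greedy_scan (greedy_scan [] P) zs"
    using greedy_scan_filter_unserved[OF False] greedy_scan_filter_unserved[OF free(1)] prefix
    by (metis greedy_scan_append)
  then have "set (greedy_scan [] P) \<subseteq> set (greedy_scan [] P')"
    by (simp add: greedy_scan_mono)
  then have "\<forall>(j, T)\<in>set (greedy_scan [] P). S \<inter> T = {}"
    using free(2) \<open>S \<subseteq> A\<close> by blast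
  then have "(i, S) \<in> set (greedy_scan [] (P @ [(i, S)]))"
    using False by (intro greedy_scan_accepts_free) auto
  then show ?thesis by force
qed

section \<open>Valuations, allocations and welfare\<close>

lemma val_nonneg: "finite (snd t) \<Longrightarrow> 0 \<le> val t X"
  unfolding val_def by (rule Max_ge) auto

lemma val_ge: "finite (snd t) \<Longrightarrow> S \<in> snd t \<Longrightarrow> S \<subseteq> X \<Longrightarrow> fst t S \<le> val t X"
  unfolding val_def by (rule Max_ge) auto

lemma val_attained:
  assumes "finite (snd t)" "val t X \<noteq> 0"
  shows "\<exists>S\<in>snd t. S \<subseteq> X \<and> val t X = fst t S"
proof -
  have "val t X \<in> insert 0 (fst t ` {S \<in> snd t. S \<subseteq> X})"
    unfolding val_def by (rule Max_in) (use assms(1) in auto)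
  then show ?thesis using assms(2) by auto
qed

lemma alloc_of_eq:
  assumes "distinct (map fst acc)" "(i, X) \<in> set acc"
  shows "alloc_of acc i = X"
proof -
  have "S = X" if "(i, S) \<in> set acc" for S
    using assms that by (metis eq_key_imp_eq_value)
  then have "{S. (i, S) \<in> set acc} = {X}" using assms(2) by blast
  then show ?thesis by (simp add: alloc_of_def)
qed

lemma alloc_of_nonempty:
  assumes "distinct (map fst acc)" "alloc_of acc i \<noteq> {}"
  shows "(i, alloc_of acc i) \<in> set acc"
proof -
  obtain X where "(i, X) \<in> set acc" using assms(2) by (auto simp: alloc_of_def)
  then show ?thesis using alloc_of_eq[OF assms(1)] by simp
qed

lemma alloc_of_single: "alloc_of [(j, X)] i = (if j = i then X else {})"
  by (auto simp: alloc_of_def)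

text \<open>Truthfulness with verification reduces to monotonicity: by verification the declared
  value of the set won by a lie is at most the true value \<open>v\<^sub>i(S)\<close> of a demanded subset \<open>S\<close>
  of it, and it suffices that declaring the truth then wins a set worth at least \<open>v\<^sub>i(S)\<close>.\<close>
lemma truthful_verifI:
  assumes demanded: "\<And>B i. \<forall>j<n. valid_type U k (B j) \<Longrightarrow> i < n \<Longrightarrow> M B i \<noteq> {} \<Longrightarrow> M B i \<in> snd (B i)"
    and monotone: "\<And>i B B' S. i < n \<Longrightarrow> \<forall>j<n. valid_type U k (B j) \<Longrightarrow> \<forall>j<n. valid_type U k (B' j) \<Longrightarrow>
      \<forall>j. j \<noteq> i \<longrightarrow> B j = B' j \<Longrightarrow> S \<in> snd (B i) \<Longrightarrow> S \<subseteq> M B' i \<Longrightarrow> 0 < fst (B i) S \<Longrightarrow>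
      fst (B' i) (M B' i) \<le> fst (B i) S \<Longrightarrow> fst (B i) S \<le> val (B i) (M B i)"
  shows "truthful_verif U n k M"
  unfolding truthful_verif_def
proof (intro allI impI)
  fix i b t b'
  assume i: "i < n" and vb: "\<forall>j<n. valid_type U k (b j)" and vt: "valid_type U k t"
    and vb': "valid_type U k b'" and ver: "val b' (M (b(i := b')) i) \<le> val t (M (b(i := b')) i)"
  define A where "A = M (b(i := b')) i"
  have vB: "\<forall>j<n. valid_type U k ((b(i := t)) j)" and vB': "\<forall>j<n. valid_type U k ((b(i := b')) j)"
    using vb vt vb' by simp_all
  have fin: "finite (snd t)" "finite (snd b')" using vt vb' by (simp_all add: valid_type_def)
  show "val t A \<le> val t (M (b(i := t)) i)"
  proof (cases "val t A = 0")
    case True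
    then show ?thesis using val_nonneg[OF fin(1)] by simp
  next
    case False
    then obtain S where S: "S \<in> snd t" "S \<subseteq> A" "val t A = fst t S"
      using val_attained[OF fin(1) False] by blast
    have "S \<noteq> {}" using vt S(1) by (simp add: valid_type_def)
    then have "A \<in> snd b'" using demanded[of "b(i := b')" i, OF vB' i] S(2) by (auto simp: A_def)
    then have "fst b' A \<le> val b' A" using val_ge[OF fin(2)] by blast
    then have "fst b' A \<le> fst t S" using ver S(3) by (simp add: A_def)
    moreover have "0 < fst t S" using False S(3) val_nonneg[OF fin(1), of A] by simp
    ultimately show ?thesis
      using monotone[of i "b(i := t)" "b(i := b')" S, OF i vB vB'] S by (simp add: A_def)
  qed
qed

lemma demanded_subset:
  "\<forall>j<n. valid_type U k (B j) \<Longrightarrow> demanded n B P \<subseteq> {..<n} \<times> Pow U"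
  by (auto simp: demanded_def valid_type_def)

lemma demanded_others:
  "\<forall>j. j \<noteq> i \<longrightarrow> B j = B' j \<Longrightarrow> fst p \<noteq> i \<Longrightarrow> p \<in> demanded n B P \<longleftrightarrow> p \<in> demanded n B' P"
  by (cases p) (simp add: demanded_def)

lemma sorted_bids_eq:
  "sorted_bids n B prio P = greedy_order B prio {p \<in> demanded n B P. 0 < bid_value B p}"
  by (simp add: sorted_bids_def bid_value_def)

lemma welfare_nonneg: "\<forall>i<n. finite (snd (t i)) \<Longrightarrow> 0 \<le> welfare n t A"
  unfolding welfare_def by (intro sum_nonneg) (simp add: val_nonneg)

lemma welfare_alloc_of_ge:
  assumes "distinct (map fst G)" "\<forall>g\<in>set G. fst g < n \<and> snd g \<in> snd (t (fst g))"
    and "\<forall>i<n. finite (snd (t i))"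
  shows "(\<Sum>g\<in>set G. bid_value t g) \<le> welfare n t (alloc_of G)"
proof -
  have "(\<Sum>g\<in>set G. bid_value t g) \<le> (\<Sum>g\<in>set G. val (t (fst g)) (alloc_of G (fst g)))"
  proof (rule sum_mono)
    fix g assume g: "g \<in> set G"
    then have "alloc_of G (fst g) = snd g"
      using alloc_of_eq[OF assms(1), of "fst g" "snd g"] by simp
    then show "bid_value t g \<le> val (t (fst g)) (alloc_of G (fst g))"
      using val_ge[of "t (fst g)" "snd g" "snd g"] assms(2,3) g by (simp add: bid_value_def)
  qed
  also have "\<dots> = (\<Sum>i\<in>fst ` set G. val (t i) (alloc_of G i))"
    using assms(1) by (simp add: sum.reindex distinct_map)
  also have "\<dots> \<le> (\<Sum>i<n. val (t i) (alloc_of G i))"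
    by (rule sum_mono2) (use assms(2,3) in \<open>auto simp: val_nonneg\<close>)
  finally show ?thesis by (simp add: welfare_def)
qed

lemma card_meeting_disjoint_le:
  assumes "finite X" "disjoint_family_on T J"
  shows "card {j \<in> J. X \<inter> T j \<noteq> {}} \<le> card X"
proof -
  have "\<forall>j\<in>{j \<in> J. X \<inter> T j \<noteq> {}}. \<exists>x. x \<in> X \<inter> T j" by blast
  from bchoice[OF this] obtain f where f: "\<forall>j\<in>{j \<in> J. X \<inter> T j \<noteq> {}}. f j \<in> X \<inter> T j" ..
  have "inj_on f {j \<in> J. X \<inter> T j \<noteq> {}}"
  proof (rule inj_onI)
    fix a b assume a: "a \<in> {j \<in> J. X \<inter> T j \<noteq> {}}" and b: "b \<in> {j \<in> J. X \<inter> T j \<noteq> {}}"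
      and "f a = f b"
    then have "T a \<inter> T b \<noteq> {}" using bspec[OF f a] bspec[OF f b] by auto
    then show "a = b" using assms(2) a b by (auto simp: disjoint_family_on_def)
  qed
  then show ?thesis using f assms(1) by (intro card_inj_on_le) auto
qed

text \<open>Charging argument: each \<open>(j, T j)\<close> is charged to a heavier bid \<open>h j\<close> of \<open>G\<close> that shares
  its bidder or meets \<open>T j\<close>; as the \<open>T j\<close> are disjoint, a bid \<open>g\<close> is charged at most
  \<open>1 + |snd g|\<close> times.\<close>
lemma sum_le_by_charging:
  fixes w :: "'i \<times> 'a set \<Rightarrow> real"
  assumes fin: "finite J" "finite G" and h: "\<forall>j\<in>J. h j \<in> G"
    and heavier: "\<forall>j\<in>J. w (j, T j) \<le> w (h j) \<and> (fst (h j) = j \<or> snd (h j) \<inter> T j \<noteq> {})"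
    and disj: "disjoint_family_on T J"
    and G: "\<forall>g\<in>G. finite (snd g) \<and> real (card (snd g)) \<le> c \<and> 0 \<le> w g"
  shows "(\<Sum>j\<in>J. w (j, T j)) \<le> (c + 1) * (\<Sum>g\<in>G. w g)"
proof -
  have charged: "real (card {j \<in> J. h j = g}) \<le> c + 1" if g: "g \<in> G" for g
  proof -
    have "{j \<in> J. h j = g} \<subseteq> {fst g} \<union> {j \<in> J. snd g \<inter> T j \<noteq> {}}"
      using heavier by fastforce
    then have "card {j \<in> J. h j = g} \<le> card ({fst g} \<union> {j \<in> J. snd g \<inter> T j \<noteq> {}})"
      using fin(1) by (intro card_mono) auto
    also have "\<dots> \<le> 1 + card {j \<in> J. snd g \<inter> T j \<noteq> {}}"
      using card_Un_le[of "{fst g}"] by simp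
    also have "\<dots> \<le> 1 + card (snd g)"
      using card_meeting_disjoint_le[OF _ disj] G g by simp
    finally have "real (card {j \<in> J. h j = g}) \<le> real (1 + card (snd g))"
      by (rule of_nat_mono)
    moreover have "real (card (snd g)) \<le> c" using G g by blast
    ultimately show ?thesis by simp
  qed
  have "(\<Sum>j\<in>J. w (j, T j)) \<le> (\<Sum>j\<in>J. w (h j))"
    using heavier by (intro sum_mono) auto
  also have "\<dots> = (\<Sum>g\<in>G. real (card {j \<in> J. h j = g}) * w g)"
    using sum.group[OF fin, of h "\<lambda>j. w (h j)"] h by (simp add: image_subset_iff)
  also have "\<dots> \<le> (\<Sum>g\<in>G. (c + 1) * w g)"
    using charged G by (intro sum_mono mult_right_mono) auto
  finally show ?thesis by (simp add: sum_distrib_left)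
qed

lemma card_mult_le_card_disjoint:
  assumes "finite U" "finite J" "\<forall>j\<in>J. T j \<subseteq> U" "disjoint_family_on T J"
    and "\<forall>j\<in>J. c \<le> real (card (T j))"
  shows "real (card J) * c \<le> real (card U)"
proof -
  have "real (card J) * c \<le> (\<Sum>j\<in>J. real (card (T j)))"
    using sum_bounded_below[of J c "\<lambda>j. real (card (T j))"] assms(5) by simp
  also have "\<dots> = real (card (\<Union> (T ` J)))"
    using assms(1-4)
    by (subst card_UN_disjoint) (auto simp: disjoint_family_on_def intro: finite_subset)
  also have "\<dots> \<le> real (card U)"
    using assms(1,3) by (intro of_nat_mono card_mono) auto
  finally show ?thesis .
qed

lemma feasible_welfare_bids:
  assumes valid: "\<forall>i<n. valid_type U k (t i)" and feas: "feasible U n A"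
  obtains J T where "J \<subseteq> {..<n}" "\<forall>j\<in>J. T j \<in> snd (t j) \<and> 0 < fst (t j) (T j)"
    "disjoint_family_on T J" "welfare n t A = (\<Sum>j\<in>J. bid_value t (j, T j))"
proof -
  define J where "J = {j \<in> {..<n}. val (t j) (A j) \<noteq> 0}"
  have fin: "\<forall>i<n. finite (snd (t i))" using valid by (simp add: valid_type_def)
  have "\<exists>S. S \<in> snd (t j) \<and> S \<subseteq> A j \<and> val (t j) (A j) = fst (t j) S" if "j \<in> J" for j
    using val_attained[of "t j" "A j"] fin that by (auto simp: J_def)
  then have "\<forall>j\<in>J. \<exists>S. S \<in> snd (t j) \<and> S \<subseteq> A j \<and> val (t j) (A j) = fst (t j) S" by blast
  from bchoice[OF this] obtain T
    where T: "\<forall>j\<in>J. T j \<in> snd (t j) \<and> T j \<subseteq> A j \<and> val (t j) (A j) = fst (t j) (T j)" ..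
  show ?thesis
  proof
    show "J \<subseteq> {..<n}" by (auto simp: J_def)
    show "\<forall>j\<in>J. T j \<in> snd (t j) \<and> 0 < fst (t j) (T j)"
    proof
      fix j assume j: "j \<in> J"
      then have "val (t j) (A j) \<noteq> 0" "0 \<le> val (t j) (A j)"
        using fin val_nonneg[of "t j"] by (auto simp: J_def)
      then show "T j \<in> snd (t j) \<and> 0 < fst (t j) (T j)" using bspec[OF T j] by auto
    qed
    show "disjoint_family_on T J"
      unfolding disjoint_family_on_def
    proof (intro ballI impI)
      fix i j assume i: "i \<in> J" and j: "j \<in> J" and "i \<noteq> j"
      then have "A i \<inter> A j = {}" using feas by (auto simp: feasible_def J_def)
      then show "T i \<inter> T j = {}" using bspec[OF T i] bspec[OF T j] by blast
    qed
    have "welfare n t A = (\<Sum>j\<in>J. val (t j) (A j))"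
      unfolding welfare_def by (rule sum.mono_neutral_right) (auto simp: J_def)
    then show "welfare n t A = (\<Sum>j\<in>J. bid_value t (j, T j))"
      using T by (simp add: bid_value_def)
  qed
qed

lemma expected_welfare_RandPoly:
  "expected_welfare n t (RandPoly U n prio) =
     (welfare n t (max_only n prio t) + welfare n t (greedy_small U n prio t)) / 2"
  by (simp add: expected_welfare_def RandPoly_def)

lemma set_pmf_RandPoly: "set_pmf (RandPoly U n prio) = {max_only n prio, greedy_small U n prio}"
  by (auto simp: RandPoly_def UNIV_bool)

section \<open>RandPoly\<close>

locale single_supply_auction =
  fixes U :: "'g set" and n k :: nat and prio :: "nat \<times> 'g set \<Rightarrow> nat"
  assumes finite_goods: "finite U"
    and prio_inj: "inj_on prio ({..<n} \<times> Pow U)"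
begin

abbreviation small :: "'g set \<Rightarrow> bool" where
  "small S \<equiv> real (card S) \<le> sqrt (real (card U))"

abbreviation greedy_accepted :: "(nat \<Rightarrow> 'g btype) \<Rightarrow> (nat \<times> 'g set) list" where
  "greedy_accepted B \<equiv> greedy_scan [] (sorted_bids n B prio small)"

abbreviation max_order :: "(nat \<Rightarrow> 'g btype) \<Rightarrow> (nat \<times> 'g set) list" where
  "max_order B \<equiv> greedy_order B prio (demanded n B (\<lambda>_. True))"

lemma greedy_order_bids:
  assumes "\<forall>j<n. valid_type U k (B j)" "E \<subseteq> demanded n B P"
  shows "finite E" "inj_on prio E" "set (greedy_order B prio E) = E"
    "sorted_wrt (greedy_before B prio) (greedy_order B prio E)"
proof -
  have sub: "E \<subseteq> {..<n} \<times> Pow U" using assms demanded_subset by blast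
  show fin: "finite E" using finite_subset[OF sub] finite_goods by blast
  show inj: "inj_on prio E" using inj_on_subset[OF prio_inj sub] .
  show "set (greedy_order B prio E) = E" "sorted_wrt (greedy_before B prio) (greedy_order B prio E)"
    using greedy_order_set_sorted[OF fin inj] by blast+
qed

lemma set_sorted_bids:
  assumes "\<forall>j<n. valid_type U k (B j)"
  shows "set (sorted_bids n B prio P) = {p \<in> demanded n B P. 0 < bid_value B p}"
proof -
  have "{p \<in> demanded n B P. 0 < bid_value B p} \<subseteq> demanded n B P" by blast
  from greedy_order_bids(3)[OF assms this] show ?thesis by (simp add: sorted_bids_eq)
qed

lemma sorted_wrt_sorted_bids:
  assumes "\<forall>j<n. valid_type U k (B j)"
  shows "sorted_wrt (greedy_before B prio) (sorted_bids n B prio P)"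
proof -
  have "{p \<in> demanded n B P. 0 < bid_value B p} \<subseteq> demanded n B P" by blast
  from greedy_order_bids(4)[OF assms this] show ?thesis by (simp add: sorted_bids_eq)
qed

lemma max_order_set_sorted:
  assumes "\<forall>j<n. valid_type U k (B j)"
  shows "set (max_order B) = demanded n B (\<lambda>_. True)"
    and "sorted_wrt (greedy_before B prio) (max_order B)"
  using greedy_order_bids(3,4)[OF assms order_refl] by blast+

lemma greedy_small_eq: "greedy_small U n prio B = alloc_of (greedy_accepted B)"
  by (simp add: greedy_small_def)

lemma distinct_greedy_accepted: "distinct (map fst (greedy_accepted B))"
  by (rule distinct_greedy_scan) simp

lemma max_only_Cons: "max_order B = (j, X) # L \<Longrightarrow> max_only n prio B i = (if j = i then X else {})"
  by (simp add: max_only_def alloc_of_single)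

lemma max_only_nonempty:
  assumes "max_only n prio B i \<noteq> {}"
  shows "max_order B = (i, max_only n prio B i) # tl (max_order B)"
proof (cases "max_order B")
  case Nil
  then show ?thesis using assms by (simp add: max_only_def)
next
  case (Cons p L)
  then show ?thesis using assms max_only_Cons[of B "fst p" "snd p" L i]
    by (cases p) (auto split: if_splits)
qed

lemma sorted_bids_others_prefix:
  assumes vB: "\<forall>j<n. valid_type U k (B j)" and vB': "\<forall>j<n. valid_type U k (B' j)"
    and others: "\<forall>j. j \<noteq> i \<longrightarrow> B j = B' j"
    and L: "sorted_bids n B prio P = Q @ (i, S) # Rs"
    and L': "sorted_bids n B' prio P = Q' @ (i, A) # Rs'"
    and le: "fst (B' i) A \<le> fst (B i) S"
  shows "\<exists>zs. filter (\<lambda>p. fst p \<noteq> i) Q' = filter (\<lambda>p. fst p \<noteq> i) Q @ zs"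
proof -
  let ?E = "{p \<in> demanded n B P. 0 < bid_value B p}"
    and ?E' = "{p \<in> demanded n B' P. 0 < bid_value B' p}"
  have E: "?E \<subseteq> demanded n B P" and E': "?E' \<subseteq> demanded n B' P" by blast+
  have "{p \<in> ?E. fst p \<noteq> i} = {p \<in> ?E'. fst p \<noteq> i}"
    using demanded_others[OF others] others by (auto simp: bid_value_def)
  from greedy_order_others_prefix[OF greedy_order_bids(1)[OF vB E] greedy_order_bids(1)[OF vB' E']
      greedy_order_bids(2)[OF vB E] greedy_order_bids(2)[OF vB' E'] others this] L L' le
  show ?thesis by (simp add: sorted_bids_eq)
qed

lemma max_order_others_prefix:
  assumes vB: "\<forall>j<n. valid_type U k (B j)" and vB': "\<forall>j<n. valid_type U k (B' j)"
    and others: "\<forall>j. j \<noteq> i \<longrightarrow> B j = B' j"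
    and L: "max_order B = Q @ (i, S) # Rs" and L': "max_order B' = Q' @ (i, A) # Rs'"
    and le: "fst (B' i) A \<le> fst (B i) S"
  shows "\<exists>zs. filter (\<lambda>p. fst p \<noteq> i) Q' = filter (\<lambda>p. fst p \<noteq> i) Q @ zs"
proof -
  have "{p \<in> demanded n B (\<lambda>_. True). fst p \<noteq> i} = {p \<in> demanded n B' (\<lambda>_. True). fst p \<noteq> i}"
    using demanded_others[OF others] by auto
  from greedy_order_others_prefix[OF greedy_order_bids(1)[OF vB order_refl]
      greedy_order_bids(1)[OF vB' order_refl] greedy_order_bids(2)[OF vB order_refl]
      greedy_order_bids(2)[OF vB' order_refl] others this L L' le]
  show ?thesis .
qed

lemma greedy_accepted_monotone:
  assumes vB: "\<forall>j<n. valid_type U k (B j)" and vB': "\<forall>j<n. valid_type U k (B' j)"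
    and others: "\<forall>j. j \<noteq> i \<longrightarrow> B j = B' j"
    and won: "(i, A) \<in> set (greedy_accepted B')"
    and S: "S \<in> snd (B i)" "S \<subseteq> A" "0 < fst (B i) S" and le: "fst (B' i) A \<le> fst (B i) S"
  shows "\<exists>X. (i, X) \<in> set (greedy_accepted B) \<and> X \<in> snd (B i) \<and> fst (B i) S \<le> fst (B i) X"
proof -
  have iA: "(i, A) \<in> set (sorted_bids n B' prio small)"
    using won set_greedy_scan_subset by fastforce
  then have i: "i < n" and A: "A \<in> snd (B' i)" "small A"
    by (simp_all add: set_sorted_bids[OF vB'] demanded_def)
  have "A \<subseteq> U" using A(1) vB' i by (simp add: valid_type_def)
  then have "card S \<le> card A" using S(2) finite_goods by (meson card_mono finite_subset)
  then have "(i, S) \<in> set (sorted_bids n B prio small)"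
    using A S i by (simp add: set_sorted_bids[OF vB] demanded_def bid_value_def)
  then obtain P Rs where L: "sorted_bids n B prio small = P @ (i, S) # Rs" by (meson split_list)
  obtain P' Rs' where L': "sorted_bids n B' prio small = P' @ (i, A) # Rs'"
    using iA by (meson split_list)
  obtain zs where prefix: "filter (\<lambda>p. fst p \<noteq> i) P' = filter (\<lambda>p. fst p \<noteq> i) P @ zs"
    using sorted_bids_others_prefix[OF vB vB' others L L' le] by blast
  have "distinct (P' @ (i, A) # Rs')"
    using sorted_wrt_sorted_bids[OF vB'] L' sorted_wrt_asym_distinct greedy_before_asym by metis
  from greedy_scan_served_by[OF won[unfolded L'] this prefix S(2)]
  obtain X where X: "(i, X) \<in> set (greedy_scan [] (P @ [(i, S)]))" by force
  then have "(i, X) \<in> set (greedy_accepted B)"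
    using greedy_scan_mono[of "greedy_scan [] (P @ [(i, S)])" Rs]
    by (auto simp: L greedy_scan_append[symmetric])
  moreover have "(i, X) \<in> set (sorted_bids n B prio small)"
    using X set_greedy_scan_subset L by fastforce
  then have "X \<in> snd (B i)" by (simp add: set_sorted_bids[OF vB] demanded_def)
  moreover have "fst (B i) S \<le> fst (B i) X"
  proof (cases "X = S")
    case False
    then have "(i, X) \<in> set P" using X set_greedy_scan_subset by fastforce
    then have "greedy_before B prio (i, X) (i, S)"
      using sorted_wrt_sorted_bids[OF vB, of small] L by (simp add: sorted_wrt_append)
    from greedy_before_value_le[OF this] show ?thesis by (simp add: bid_value_def)
  qed simp
  ultimately show ?thesis by blast
qed

lemma max_order_monotone:
  assumes vB: "\<forall>j<n. valid_type U k (B j)" and vB': "\<forall>j<n. valid_type U k (B' j)"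
    and others: "\<forall>j. j \<noteq> i \<longrightarrow> B j = B' j" and i: "i < n"
    and won: "max_order B' = (i, A) # L'"
    and S: "S \<in> snd (B i)" and le: "fst (B' i) A \<le> fst (B i) S"
  shows "\<exists>X L. max_order B = (i, X) # L \<and> X \<in> snd (B i) \<and> fst (B i) S \<le> fst (B i) X"
proof -
  have "(i, S) \<in> set (max_order B)"
    using max_order_set_sorted(1)[OF vB] S i by (simp add: demanded_def)
  then obtain P Rs where L: "max_order B = P @ (i, S) # Rs" by (meson split_list)
  have "max_order B' = [] @ (i, A) # L'" using won by simp
  from max_order_others_prefix[OF vB vB' others L this le]
  have own: "\<forall>p\<in>set P. fst p = i" by (simp add: filter_empty_conv)
  show ?thesis
  proof (cases P)
    case Nil
    then show ?thesis using L S by simp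
  next
    case (Cons p P'')
    then have "greedy_before B prio p (i, S)" "p \<in> set (max_order B)"
      using max_order_set_sorted(2)[OF vB] L by (auto simp: sorted_wrt_append)
    then show ?thesis
      using Cons L own max_order_set_sorted(1)[OF vB] greedy_before_value_le[of B prio p "(i, S)"]
      by (cases p) (auto simp: bid_value_def demanded_def)
  qed
qed

lemma greedy_small_truthful: "truthful_verif U n k (greedy_small U n prio)"
proof (rule truthful_verifI)
  fix B i
  assume vB: "\<forall>j<n. valid_type U k (B j)" and "greedy_small U n prio B i \<noteq> {}"
  then have "(i, greedy_small U n prio B i) \<in> set (sorted_bids n B prio small)"
    using alloc_of_nonempty[OF distinct_greedy_accepted] set_greedy_scan_subset
    by (fastforce simp: greedy_small_eq)
  then show "greedy_small U n prio B i \<in> snd (B i)"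
    by (simp add: set_sorted_bids[OF vB] demanded_def)
next
  fix i B B' S
  assume i: "i < n" and vB: "\<forall>j<n. valid_type U k (B j)" and vB': "\<forall>j<n. valid_type U k (B' j)"
    and others: "\<forall>j. j \<noteq> i \<longrightarrow> B j = B' j"
    and S: "S \<in> snd (B i)" "S \<subseteq> greedy_small U n prio B' i" "0 < fst (B i) S"
    and le: "fst (B' i) (greedy_small U n prio B' i) \<le> fst (B i) S"
  have "greedy_small U n prio B' i \<noteq> {}" using S(1,2) vB i by (auto simp: valid_type_def)
  then have "(i, greedy_small U n prio B' i) \<in> set (greedy_accepted B')"
    using alloc_of_nonempty[OF distinct_greedy_accepted] by (simp add: greedy_small_eq)
  from greedy_accepted_monotone[OF vB vB' others this S le]
  obtain X where "(i, X) \<in> set (greedy_accepted B)" "X \<in> snd (B i)" "fst (B i) S \<le> fst (B i) X"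
    by blast
  then show "fst (B i) S \<le> val (B i) (greedy_small U n prio B i)"
    using alloc_of_eq[OF distinct_greedy_accepted] val_ge[of "B i" X X] vB i
    by (simp add: greedy_small_eq valid_type_def)
qed

lemma max_only_truthful: "truthful_verif U n k (max_only n prio)"
proof (rule truthful_verifI)
  fix B i
  assume vB: "\<forall>j<n. valid_type U k (B j)" and "max_only n prio B i \<noteq> {}"
  then have "(i, max_only n prio B i) \<in> set (max_order B)"
    using max_only_nonempty by (metis list.set_intros(1))
  then show "max_only n prio B i \<in> snd (B i)"
    using max_order_set_sorted(1)[OF vB] by (simp add: demanded_def)
next
  fix i B B' S
  assume i: "i < n" and vB: "\<forall>j<n. valid_type U k (B j)" and vB': "\<forall>j<n. valid_type U k (B' j)"
    and others: "\<forall>j. j \<noteq> i \<longrightarrow> B j = B' j"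
    and S: "S \<in> snd (B i)" "S \<subseteq> max_only n prio B' i"
    and le: "fst (B' i) (max_only n prio B' i) \<le> fst (B i) S"
  have "max_only n prio B' i \<noteq> {}" using S vB i by (auto simp: valid_type_def)
  then have "max_order B' = (i, max_only n prio B' i) # tl (max_order B')"
    by (rule max_only_nonempty)
  from max_order_monotone[OF vB vB' others i this S(1) le]
  obtain X L where "max_order B = (i, X) # L" "X \<in> snd (B i)" "fst (B i) S \<le> fst (B i) X"
    by blast
  then show "fst (B i) S \<le> val (B i) (max_only n prio B i)"
    using max_only_Cons val_ge[of "B i" X X] vB i by (simp add: valid_type_def)
qed

lemma bid_le_welfare_max_only:
  assumes valid: "\<forall>i<n. valid_type U k (t i)" and p: "p \<in> demanded n t (\<lambda>_. True)"
  shows "bid_value t p \<le> welfare n t (max_only n prio t)"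
proof -
  obtain h L where L: "max_order t = h # L"
    using p max_order_set_sorted(1)[OF valid] by (cases "max_order t") auto
  have "p \<in> set (h # L)" using p max_order_set_sorted(1)[OF valid] L by simp
  then have "bid_value t p \<le> bid_value t h"
    using max_order_set_sorted(2)[OF valid] L greedy_before_value_le[of t prio h p] by auto
  moreover have "max_only n prio t = alloc_of [h]" using L by (simp add: max_only_def)
  moreover have "h \<in> demanded n t (\<lambda>_. True)" using max_order_set_sorted(1)[OF valid] L by auto
  then have "bid_value t h \<le> welfare n t (alloc_of [h])"
    using welfare_alloc_of_ge[of "[h]" n t] valid by (auto simp: demanded_def valid_type_def)
  ultimately show ?thesis by simp
qed

lemma sum_large_bids_le:
  assumes valid: "\<forall>i<n. valid_type U k (t i)" and J: "J \<subseteq> {..<n}" "\<forall>j\<in>J. T j \<in> snd (t j)"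
    and disj: "disjoint_family_on T J" and large: "\<forall>j\<in>J. \<not> small (T j)"
  shows "(\<Sum>j\<in>J. bid_value t (j, T j)) \<le> sqrt (card U) * welfare n t (max_only n prio t)"
proof -
  define W where "W = welfare n t (max_only n prio t)"
  have "\<forall>i<n. finite (snd (t i))" using valid by (simp add: valid_type_def)
  then have "0 \<le> W" unfolding W_def by (rule welfare_nonneg)
  have "finite J" using J(1) finite_subset by blast
  have "(\<Sum>j\<in>J. bid_value t (j, T j)) \<le> real (card J) * W"
    using J bid_le_welfare_max_only[OF valid]
    by (intro sum_bounded_above) (auto simp: W_def demanded_def)
  moreover have "real (card J) \<le> sqrt (card U)"
  proof (cases "J = {}")
    case False
    then obtain j where j: "j \<in> J" by blast
    have TU: "\<forall>j\<in>J. T j \<subseteq> U \<and> T j \<noteq> {}"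
    proof
      fix j assume "j \<in> J"
      then have "valid_type U k (t j)" "T j \<in> snd (t j)" using valid J by auto
      then show "T j \<subseteq> U \<and> T j \<noteq> {}" by (simp add: valid_type_def)
    qed
    have "U \<noteq> {}" using TU j by blast
    then have pos: "0 < sqrt (card U)" using finite_goods by (simp add: card_gt_0_iff)
    have "real (card J) * sqrt (card U) \<le> real (card U)"
      using TU large by (intro card_mult_le_card_disjoint[OF finite_goods \<open>finite J\<close> _ disj]) auto
    also have "\<dots> = sqrt (card U) * sqrt (card U)" by simp
    finally show ?thesis using pos by (metis mult_le_cancel_right_pos)
  qed simp
  ultimately show ?thesis using \<open>0 \<le> W\<close> by (simp add: W_def) (meson mult_right_mono order_trans)
qed

lemma greedy_accepted_bid:
  assumes valid: "\<forall>i<n. valid_type U k (t i)" and g: "g \<in> set (greedy_accepted t)"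
  shows "fst g < n" "snd g \<in> snd (t (fst g))" "small (snd g)" "0 < bid_value t g" "finite (snd g)"
proof -
  obtain i S where g_eq: "g = (i, S)" by force
  have "g \<in> set (sorted_bids n t prio small)" using g set_greedy_scan_subset by fastforce
  then show i: "fst g < n" and S: "snd g \<in> snd (t (fst g))" "small (snd g)" "0 < bid_value t g"
    by (simp_all add: set_sorted_bids[OF valid] demanded_def g_eq)
  have "snd g \<subseteq> U" using valid i S(1) by (simp add: valid_type_def)
  then show "finite (snd g)" using finite_goods by (rule finite_subset)
qed

lemma greedy_accepted_blocks:
  assumes valid: "\<forall>i<n. valid_type U k (t i)"
    and "j < n" "T \<in> snd (t j)" "0 < fst (t j) T" "small T"
  shows "\<exists>g\<in>set (greedy_accepted t).
    bid_value t (j, T) \<le> bid_value t g \<and> (fst g = j \<or> snd g \<inter> T \<noteq> {})"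
proof -
  have "(j, T) \<in> set (sorted_bids n t prio small)"
    using assms by (simp add: set_sorted_bids[OF valid] demanded_def bid_value_def)
  from greedy_scan_blocker[OF sorted_wrt_sorted_bids[OF valid] this, of "[]"]
  show ?thesis using greedy_before_value_le by fastforce
qed

lemma sum_small_bids_le:
  assumes valid: "\<forall>i<n. valid_type U k (t i)" and J: "J \<subseteq> {..<n}"
    "\<forall>j\<in>J. T j \<in> snd (t j) \<and> 0 < fst (t j) (T j)"
    and disj: "disjoint_family_on T J" and small: "\<forall>j\<in>J. small (T j)"
  shows "(\<Sum>j\<in>J. bid_value t (j, T j)) \<le> (sqrt (card U) + 1) * welfare n t (greedy_small U n prio t)"
proof -
  let ?G = "greedy_accepted t"
  have "\<exists>g. g \<in> set ?G \<and> bid_value t (j, T j) \<le> bid_value t g \<and> (fst g = j \<or> snd g \<inter> T j \<noteq> {})"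
    if "j \<in> J" for j
    using greedy_accepted_blocks[OF valid, of j "T j"] J small that by blast
  then have "\<forall>j\<in>J. \<exists>g. g \<in> set ?G \<and> bid_value t (j, T j) \<le> bid_value t g \<and>
      (fst g = j \<or> snd g \<inter> T j \<noteq> {})" by blast
  from bchoice[OF this] obtain h where h: "\<forall>j\<in>J. h j \<in> set ?G \<and>
      bid_value t (j, T j) \<le> bid_value t (h j) \<and> (fst (h j) = j \<or> snd (h j) \<inter> T j \<noteq> {})" ..
  have G: "\<forall>g\<in>set ?G. finite (snd g) \<and> real (card (snd g)) \<le> sqrt (card U) \<and> 0 \<le> bid_value t g"
    by (simp add: greedy_accepted_bid[OF valid] less_imp_le)
  have "(\<Sum>j\<in>J. bid_value t (j, T j)) \<le> (sqrt (card U) + 1) * (\<Sum>g\<in>set ?G. bid_value t g)"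
    using J(1) h G disj by (intro sum_le_by_charging) (auto intro: finite_subset)
  also have "(\<Sum>g\<in>set ?G. bid_value t g) \<le> welfare n t (greedy_small U n prio t)"
    unfolding greedy_small_eq using valid
    by (intro welfare_alloc_of_ge distinct_greedy_accepted)
      (simp_all add: greedy_accepted_bid valid_type_def)
  finally show ?thesis by (simp add: mult_left_mono)
qed

lemma welfare_le_max_only_greedy_small:
  assumes valid: "\<forall>i<n. valid_type U k (t i)" and feas: "feasible U n A"
  shows "welfare n t A \<le>
    (sqrt (card U) + 1) * (welfare n t (max_only n prio t) + welfare n t (greedy_small U n prio t))"
proof -
  obtain J T where J: "J \<subseteq> {..<n}" "\<forall>j\<in>J. T j \<in> snd (t j) \<and> 0 < fst (t j) (T j)"
    and disj: "disjoint_family_on T J" and W: "welfare n t A = (\<Sum>j\<in>J. bid_value t (j, T j))"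
    using feasible_welfare_bids[OF valid feas] .
  define Jl where "Jl = {j \<in> J. \<not> small (T j)}"
  define Js where "Js = {j \<in> J. small (T j)}"
  have "finite J" "J = Jl \<union> Js" "Jl \<inter> Js = {}"
    using J(1) finite_subset by (auto simp: Jl_def Js_def)
  then have "welfare n t A = (\<Sum>j\<in>Jl. bid_value t (j, T j)) + (\<Sum>j\<in>Js. bid_value t (j, T j))"
    unfolding W by (simp add: sum.union_disjoint)
  also have "\<dots> \<le> sqrt (card U) * welfare n t (max_only n prio t) +
      (sqrt (card U) + 1) * welfare n t (greedy_small U n prio t)"
    using J disj by (intro add_mono sum_large_bids_le[OF valid] sum_small_bids_le[OF valid])
      (auto simp: disjoint_family_on_def Jl_def Js_def)
  also have "\<dots> \<le>
      (sqrt (card U) + 1) * (welfare n t (max_only n prio t) + welfare n t (greedy_small U n prio t))"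
    using welfare_nonneg[of n t "max_only n prio t"] valid
    by (simp add: algebra_simps valid_type_def)
  finally show ?thesis .
qed

lemma OPT_le_RandPoly:
  assumes valid: "\<forall>i<n. valid_type U k (t i)"
  shows "OPT U n t \<le> expected_welfare n t (RandPoly U n prio) * (2 * (sqrt (card U) + 1))"
proof -
  have "OPT U n t \<le>
    (sqrt (card U) + 1) * (welfare n t (max_only n prio t) + welfare n t (greedy_small U n prio t))"
    unfolding OPT_def
  proof (rule cSup_least)
    show "{welfare n t A |A. feasible U n A} \<noteq> {}" by (auto simp: feasible_def)
  qed (use welfare_le_max_only_greedy_small[OF valid] in blast)
  then show ?thesis by (simp add: expected_welfare_RandPoly field_simps)
qed

end

theorem theorem10:
  fixes U :: "'g set" and n k :: nat and prio :: "nat \<times> 'g set \<Rightarrow> nat"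
  assumes "finite U"
    and "inj_on prio ({..<n} \<times> Pow U)"
  shows "universally_truthful U n k (RandPoly U n prio)
    \<and> (\<forall>t. (\<forall>i<n. valid_type U k (t i)) \<longrightarrow>
          expected_welfare n t (RandPoly U n prio) \<ge> OPT U n t / (2 * (sqrt (real (card U)) + 1)))"
proof -
  interpret single_supply_auction U n k prio
    using assms by unfold_locales
  have "universally_truthful U n k (RandPoly U n prio)"
    using max_only_truthful greedy_small_truthful
    by (simp add: universally_truthful_def set_pmf_RandPoly)
  moreover have
    "OPT U n t / (2 * (sqrt (real (card U)) + 1)) \<le> expected_welfare n t (RandPoly U n prio)"
    if "\<forall>i<n. valid_type U k (t i)" for t
  proof (rule pos_divide_le_eq[THEN iffD2])
    show "0 < 2 * (sqrt (real (card U)) + 1)" by (intro mult_pos_pos add_nonneg_pos) simp_all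
  qed (rule OPT_le_RandPoly[OF that])
  ultimately show ?thesis by blast
qed

end
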